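(* Let $S_1,S_2\subseteq\Omega=\{0,\dots,D-1\}$ be nonempty sets with resemblance $R=\frac{|S_1\cap S_2|}{|S_1\cup S_2|}$, and fix integers $b\ge1$, $k\ge1$, $m\ge1$. Apply $k$ independent uniformly random permutations $\pi_1,\dots,\pi_k$ of $\Omega$; for each $j$ record the lowest $b$ bits of $\min\pi_j(S_1)$ and of $\min\pi_j(S_2)$, and let $T$ be the number of $j\in\{1,\dots,k\}$ for which these $b$-bit values coincide, so that $T$ is Binomial$(k,P_b)$ where $P_b$ is the probability that the lowest $b$ bits of $\min\pi(S_1)$ and $\min\pi(S_2)$ agree. Assume $P_b=C_{1,b}+(1-C_{2,b})R$ with $C_{2,b}\ne1$, where $r_1=|S_1|/D$, $r_2=|S_2|/D$, $A_{l,b}=\frac{r_l(1-r_l)^{2^b-1}}{1-(1-r_l)^{2^b}}$ ($l=1,2$), $C_{1,b}=A_{1,b}\frac{r_2}{r_1+r_2}+A_{2,b}\frac{r_1}{r_1+r_2}$, $C_{2,b}=A_{1,b}\frac{r_1}{r_1+r_2}+A_{2,b}\frac{r_2}{r_1+r_2}$. Expand the $b$-bit values of $S_1$ (resp. $S_2$) into a binary vector $x_1$ (resp. $x_2$) of length $2^bk$ consisting of $k$ consecutive blocks of length $2^b$, where block $j$ is the indicator vector of the $b$-bit value obtained from $\pi_j$; thus each $x_l$ has exactly $k$ ones and $\langle x_1,x_2\rangle=T$. Apply to $x_1,x_2$ the VW hashing with $m$ buckets and $s=1$, independently of the permutations: with i.i.d. uniform $h(i)\in\{1,\dots,m\}$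 and i.i.d. $r_i$ uniform on $\{-1,1\}$, set $g_{l,q}=\sum_i x_{l,i}r_i1\{h(i)=q\}$, $\hat T=\sum_{q=1}^m g_{1,q}g_{2,q}$, and $$\hat R_{b,vw}=\frac{\hat T/k-C_{1,b}}{1-C_{2,b}}.$$ Then $E(\hat R_{b,vw})=R$ and $$\mathrm{Var}(\hat R_{b,vw})=\frac1k\frac{P_b(1-P_b)}{[1-C_{2,b}]^2}+\frac1m\frac{1}{[1-C_{2,b}]^2}\left(1+P_b^2-\frac{P_b(1+P_b)}{k}\right).$$
   Context: The first term $\frac1k\frac{P_b(1-P_b)}{[1-C_{2,b}]^2}$ is the variance of the $b$-bit minwise hashing estimator $\hat R_b=\frac{T/k-C_{1,b}}{1-C_{2,b}}$. The relation $P_b=C_{1,b}+(1-C_{2,b})R$ is the (large-$D$) expression for the $b$-bit collision probability used throughout the paper. *)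

theory Defs
  imports "HOL-Probability.Probability"
begin

definition perm_set :: "nat \<Rightarrow> (nat \<Rightarrow> nat) set" where
  "perm_set D = {p. p permutes {..<D}}"

definition bbit :: "nat \<Rightarrow> nat set \<Rightarrow> (nat \<Rightarrow> nat) \<Rightarrow> nat" where
  "bbit b S p = Min (p ` S) mod 2 ^ b"

definition resemblance :: "nat set \<Rightarrow> nat set \<Rightarrow> real" where
  "resemblance S1 S2 = real (card (S1 \<inter> S2)) / real (card (S1 \<union> S2))"

definition Pb :: "nat \<Rightarrow> nat \<Rightarrow> nat set \<Rightarrow> nat set \<Rightarrow> real" where
  "Pb D b S1 S2 = measure_pmf.prob (pmf_of_set (perm_set D)) {p. bbit b S1 p = bbit b S2 p}"

definition A_coef :: "nat \<Rightarrow> real \<Rightarrow> real" where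
  "A_coef b r = r * (1 - r) ^ (2 ^ b - 1) / (1 - (1 - r) ^ (2 ^ b))"

definition C1b :: "nat \<Rightarrow> nat \<Rightarrow> nat set \<Rightarrow> nat set \<Rightarrow> real" where
  "C1b D b S1 S2 = (let r1 = real (card S1) / real D; r2 = real (card S2) / real D in
     A_coef b r1 * (r2 / (r1 + r2)) + A_coef b r2 * (r1 / (r1 + r2)))"

definition C2b :: "nat \<Rightarrow> nat \<Rightarrow> nat set \<Rightarrow> nat set \<Rightarrow> real" where
  "C2b D b S1 S2 = (let r1 = real (card S1) / real D; r2 = real (card S2) / real D in
     A_coef b r1 * (r1 / (r1 + r2)) + A_coef b r2 * (r2 / (r1 + r2)))"

text \<open>Joint sample space: k permutations (indexed 0..k-1), bucket function h on
  the 2^b k coordinates (values 1..m), and Rademacher signs r on the coordinates;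
  all independent and uniform (uniform on the product set).\<close>
definition sample_space :: "nat \<Rightarrow> nat \<Rightarrow> nat \<Rightarrow> nat \<Rightarrow>
    ((nat \<Rightarrow> (nat \<Rightarrow> nat)) \<times> (nat \<Rightarrow> nat) \<times> (nat \<Rightarrow> real)) set" where
  "sample_space D b k m =
     (PiE {..<k} (\<lambda>_. perm_set D)) \<times> (PiE {..<2 ^ b * k} (\<lambda>_. {1..m}))
       \<times> (PiE {..<2 ^ b * k} (\<lambda>_. {-1, 1}))"

definition xvec :: "nat \<Rightarrow> nat set \<Rightarrow> (nat \<Rightarrow> (nat \<Rightarrow> nat)) \<Rightarrow> nat \<Rightarrow> real" where
  "xvec b S ps i = (if bbit b S (ps (i div 2 ^ b)) = i mod 2 ^ b then 1 else 0)"

definition gvw :: "nat \<Rightarrow> nat \<Rightarrow> nat set \<Rightarrow> (nat \<Rightarrow> (nat \<Rightarrow> nat)) \<Rightarrow> (nat \<Rightarrow> nat)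
    \<Rightarrow> (nat \<Rightarrow> real) \<Rightarrow> nat \<Rightarrow> real" where
  "gvw b k S ps h r q = (\<Sum>i<2 ^ b * k. xvec b S ps i * r i * (if h i = q then 1 else 0))"

definition That_vw :: "nat \<Rightarrow> nat \<Rightarrow> nat \<Rightarrow> nat set \<Rightarrow> nat set \<Rightarrow>
    ((nat \<Rightarrow> (nat \<Rightarrow> nat)) \<times> (nat \<Rightarrow> nat) \<times> (nat \<Rightarrow> real)) \<Rightarrow> real" where
  "That_vw b k m S1 S2 \<omega> = (case \<omega> of (ps, h, r) \<Rightarrow>
     (\<Sum>q\<in>{1..m}. gvw b k S1 ps h r q * gvw b k S2 ps h r q))"

definition Rhat_bvw :: "nat \<Rightarrow> nat \<Rightarrow> nat \<Rightarrow> nat \<Rightarrow> nat set \<Rightarrow> nat set \<Rightarrow>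
    ((nat \<Rightarrow> (nat \<Rightarrow> nat)) \<times> (nat \<Rightarrow> nat) \<times> (nat \<Rightarrow> real)) \<Rightarrow> real" where
  "Rhat_bvw D b k m S1 S2 \<omega> =
     (That_vw b k m S1 S2 \<omega> / real k - C1b D b S1 S2) / (1 - C2b D b S1 S2)"

end

theory Submission
  imports Defs
begin

text \<open>
  Expectations over the uniform sample space are iterated averages over its three factors
  (permutations, bucket maps, sign vectors). For fixed permutations the VW estimate equals
  \<open>\<Sum>i j. x1 i * x2 j * r i * r j * [h i = h j]\<close>: its diagonal is \<open>\<langle>x1, x2\<rangle> = T\<close>, and its
  off-diagonal part is a Rademacher chaos of mean zero whose second moment, averaged over the
  buckets, is \<open>(1/m) \<Sum>i\<noteq>j. x1 i * x2 j * (x1 i * x2 j + x1 j * x2 i)\<close>, which equals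
  \<open>(k\<^sup>2 + T\<^sup>2 - 2T) / m\<close> for 0/1 vectors with k ones each. Over the independent permutations
  T is a sum of k independent indicators of mean \<open>P\<^sub>b\<close>. By the model
  \<open>P\<^sub>b = C1 + (1 - C2) R\<close> the estimator is \<open>R + (T\<^sub>v\<^sub>w - k P\<^sub>b) / (k (1 - C2))\<close>, and its
  mean and variance follow; the hypotheses on S1, S2 and b enter only through this model.
\<close>

section \<open>Uniform averages\<close>

definition avg :: "'a set \<Rightarrow> ('a \<Rightarrow> real) \<Rightarrow> real" where
  "avg A f = (\<Sum>x\<in>A. f x) / real (card A)"

lemma expectation_pmf_of_set_eq_avg:
  "finite A \<Longrightarrow> A \<noteq> {} \<Longrightarrow> measure_pmf.expectation (pmf_of_set A) f = avg A f"
  by (simp add: avg_def integral_pmf_of_set)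

lemma avg_cong: "(\<And>x. x \<in> A \<Longrightarrow> f x = g x) \<Longrightarrow> avg A f = avg A g"
  by (simp add: avg_def)

lemma avg_add: "avg A (\<lambda>x. f x + g x) = avg A f + avg A g"
  by (simp add: avg_def sum.distrib add_divide_distrib)

lemma avg_diff: "avg A (\<lambda>x. f x - g x) = avg A f - avg A g"
  by (simp add: avg_def sum_subtractf diff_divide_distrib)

lemma avg_mult_left: "avg A (\<lambda>x. c * f x) = c * avg A f"
  by (simp add: avg_def sum_distrib_left)

lemma avg_mult_right: "avg A (\<lambda>x. f x * c) = avg A f * c"
  by (simp add: avg_def sum_distrib_right)

lemma avg_divide: "avg A (\<lambda>x. f x / c) = avg A f / c"
  by (simp add: avg_def sum_divide_distrib mult.commute)

lemma avg_sum: "avg A (\<lambda>x. \<Sum>i\<in>I. f i x) = (\<Sum>i\<in>I. avg A (f i))"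
  by (simp add: avg_def sum_divide_distrib sum.swap[of _ A])

lemma avg_const: "finite A \<Longrightarrow> A \<noteq> {} \<Longrightarrow> avg A (\<lambda>_. c) = c"
  by (simp add: avg_def)

lemma avg_Times:
  "finite A \<Longrightarrow> finite B \<Longrightarrow> avg (A \<times> B) f = avg A (\<lambda>a. avg B (\<lambda>b. f (a, b)))"
  by (simp add: avg_def sum.cartesian_product card_cartesian_product sum_divide_distrib mult.commute)

lemma avg_PiE_prod:
  assumes "finite K" "\<And>l. l \<in> K \<Longrightarrow> finite (B l)"
  shows "avg (PiE K B) (\<lambda>x. \<Prod>l\<in>K. f l (x l)) = (\<Prod>l\<in>K. avg (B l) (f l))"
  using assms by (simp add: avg_def card_PiE prod_sum_PiE prod_dividef)

lemma avg_PiE_coordinate: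
  assumes "finite K" "\<And>l. l \<in> K \<Longrightarrow> finite (B l)" "\<And>l. l \<in> K \<Longrightarrow> B l \<noteq> {}"
    and "j \<in> K"
  shows "avg (PiE K B) (\<lambda>x. g (x j)) = avg (B j) g"
proof -
  have "avg (PiE K B) (\<lambda>x. g (x j)) = avg (PiE K B) (\<lambda>x. \<Prod>l\<in>K. if l = j then g (x l) else 1)"
    using assms(1,4) by simp
  also have "\<dots> = (\<Prod>l\<in>K. avg (B l) (\<lambda>v. if l = j then g v else 1))"
    using assms(1,2) by (rule avg_PiE_prod)
  also have "\<dots> = (\<Prod>l\<in>K. if l = j then avg (B j) g else 1)"
    using assms(2,3) by (intro prod.cong) (auto simp: avg_const)
  finally show ?thesis
    using assms(1,4) by simp
qed

lemma avg_PiE_two_coordinates: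
  assumes "finite K" "\<And>l. l \<in> K \<Longrightarrow> finite (B l)" "\<And>l. l \<in> K \<Longrightarrow> B l \<noteq> {}"
    and "j \<in> K" "j' \<in> K" "j \<noteq> j'"
  shows "avg (PiE K B) (\<lambda>x. g (x j) * g' (x j')) = avg (B j) g * avg (B j') g'"
proof -
  have "avg (PiE K B) (\<lambda>x. g (x j) * g' (x j')) =
      avg (PiE K B) (\<lambda>x. \<Prod>l\<in>K. (if l = j then g (x l) else 1) * (if l = j' then g' (x l) else 1))"
    using assms(1,4,5) by (simp add: prod.distrib)
  also have "\<dots> = (\<Prod>l\<in>K. avg (B l) (\<lambda>v. (if l = j then g v else 1) * (if l = j' then g' v else 1)))"
    using assms(1,2) by (rule avg_PiE_prod)
  also have "\<dots> = (\<Prod>l\<in>K. (if l = j then avg (B j) g else 1) * (if l = j' then avg (B j') g' else 1))"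
    using assms(2,3,6) by (intro prod.cong) (auto simp: avg_const)
  finally show ?thesis
    using assms(1,4,5) by (simp add: prod.distrib)
qed

definition offdiag :: "'a set \<Rightarrow> ('a \<times> 'a) set" where
  "offdiag I = (SIGMA i:I. I - {i})"

lemma finite_offdiag [simp]: "finite I \<Longrightarrow> finite (offdiag I)"
  by (simp add: offdiag_def)

lemma mem_offdiag [simp]: "(i, j) \<in> offdiag I \<longleftrightarrow> i \<in> I \<and> j \<in> I \<and> i \<noteq> j"
  by (auto simp: offdiag_def)

lemma sum_square_diag_offdiag:
  assumes "finite I"
  shows "(\<Sum>i\<in>I. \<Sum>j\<in>I. f i j) = (\<Sum>i\<in>I. f i i) + (\<Sum>(i, j)\<in>offdiag I. f i j)"
proof -
  have "(\<Sum>j\<in>I. f i j) = f i i + (\<Sum>j\<in>I - {i}. f i j)" if "i \<in> I" for i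
    using assms that by (simp add: sum.remove)
  then show ?thesis
    using assms by (simp add: sum.distrib offdiag_def sum.Sigma)
qed

lemma card_offdiag: "finite I \<Longrightarrow> card (offdiag I) = card I * (card I - 1)"
  by (simp add: offdiag_def)

lemma avg_PiE_sum_coordinates:
  assumes "finite K" "finite A" "A \<noteq> {}"
  shows "avg (PiE K (\<lambda>_. A)) (\<lambda>x. \<Sum>j\<in>K. g (x j)) = real (card K) * avg A g"
  using assms by (simp add: avg_sum avg_PiE_coordinate)

lemma avg_PiE_sum_coordinates_sq:
  assumes "finite K" "finite A" "A \<noteq> {}"
  shows "avg (PiE K (\<lambda>_. A)) (\<lambda>x. (\<Sum>j\<in>K. g (x j))\<^sup>2) =
    real (card K) * avg A (\<lambda>v. (g v)\<^sup>2) + real (card K) * (real (card K) - 1) * (avg A g)\<^sup>2"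
proof -
  have "(\<Sum>j\<in>K. g (x j))\<^sup>2 = (\<Sum>j\<in>K. (g (x j))\<^sup>2) + (\<Sum>(j, j')\<in>offdiag K. g (x j) * g (x j'))" for x
    using assms(1) by (simp add: power2_eq_square sum_product sum_square_diag_offdiag)
  then have "avg (PiE K (\<lambda>_. A)) (\<lambda>x. (\<Sum>j\<in>K. g (x j))\<^sup>2) =
      real (card K) * avg A (\<lambda>v. (g v)\<^sup>2) +
      (\<Sum>(j, j')\<in>offdiag K. avg (PiE K (\<lambda>_. A)) (\<lambda>x. g (x j) * g (x j')))"
    using avg_PiE_sum_coordinates[OF assms, of "\<lambda>v. (g v)\<^sup>2"]
    by (simp only: avg_add split_def avg_sum)
  also have "(\<Sum>(j, j')\<in>offdiag K. avg (PiE K (\<lambda>_. A)) (\<lambda>x. g (x j) * g (x j'))) =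
      (\<Sum>(j, j')\<in>offdiag K. (avg A g)\<^sup>2)"
    using assms by (intro sum.cong refl) (auto simp: power2_eq_square intro!: avg_PiE_two_coordinates)
  finally show ?thesis
    using assms(1) by (cases "K = {}") (simp_all add: card_offdiag of_nat_diff Suc_leI card_gt_0_iff)
qed

section \<open>Rademacher sign vectors\<close>

abbreviation sign_vectors :: "'a set \<Rightarrow> ('a \<Rightarrow> real) set" where
  "sign_vectors I \<equiv> PiE I (\<lambda>_. {-1, 1})"

lemma sign_vector_square: "r \<in> sign_vectors I \<Longrightarrow> i \<in> I \<Longrightarrow> r i * r i = 1"
  by (auto simp: PiE_iff)

lemma finite_sign_vectors: "finite I \<Longrightarrow> finite (sign_vectors I)"
  by (simp add: finite_PiE)

lemma sign_vectors_nonempty: "sign_vectors I \<noteq> {}"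
  by (simp add: PiE_eq_empty_iff)

lemma avg_sign_vectors_odd:
  assumes "finite I" "i \<in> I"
    and odd: "\<And>r. r \<in> sign_vectors I \<Longrightarrow> F (r(i := - r i)) = - F r"
  shows "avg (sign_vectors I) F = 0"
proof -
  let ?flip = "\<lambda>r. r(i := - r i)"
  have "(\<Sum>r\<in>sign_vectors I. F r) = (\<Sum>r\<in>sign_vectors I. F (?flip r))"
    by (rule sum.reindex_bij_witness[where i = ?flip and j = ?flip])
      (auto simp: PiE_iff \<open>i \<in> I\<close> extensional_def)
  also have "\<dots> = - (\<Sum>r\<in>sign_vectors I. F r)"
    using odd by (simp add: sum_negf)
  finally show ?thesis
    by (simp add: avg_def)
qed

lemma avg_sign_vectors_pair:
  "finite I \<Longrightarrow> i \<in> I \<Longrightarrow> j \<in> I \<Longrightarrow> i \<noteq> j \<Longrightarrow> avg (sign_vectors I) (\<lambda>r. r i * r j) = 0"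
  by (rule avg_sign_vectors_odd) auto

lemma avg_sign_vectors_quadruple:
  assumes I: "finite I" "(i, j) \<in> offdiag I" "(i', j') \<in> offdiag I"
  shows "avg (sign_vectors I) (\<lambda>r. r i * r j * (r i' * r j')) =
    (if (i', j') = (i, j) then 1 else 0) + (if (i', j') = (j, i) then 1 else 0)"
proof (cases "(i', j') = (i, j) \<or> (i', j') = (j, i)")
  case True
  then have "avg (sign_vectors I) (\<lambda>r. r i * r j * (r i' * r j')) = avg (sign_vectors I) (\<lambda>_. 1)"
    using I sign_vector_square[of _ I i] sign_vector_square[of _ I j]
    by (intro avg_cong) (auto simp: algebra_simps)
  then show ?thesis
    using True I by (auto simp: avg_const finite_sign_vectors sign_vectors_nonempty)
next
  case False
  then consider "i \<noteq> i'" "i \<noteq> j'" | "j \<noteq> i'" "j \<noteq> j'"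
    using I by auto
  then show ?thesis
  proof cases
    case 1
    then show ?thesis
      using False I by (auto intro!: avg_sign_vectors_odd[where i = i])
  next
    case 2
    then show ?thesis
      using False I by (auto intro!: avg_sign_vectors_odd[where i = j])
  qed
qed

lemma avg_sign_vectors_offdiag_form:
  assumes "finite I"
  shows "avg (sign_vectors I) (\<lambda>r. \<Sum>(i, j)\<in>offdiag I. w i j * (r i * r j)) = 0"
proof -
  have "avg (sign_vectors I) (\<lambda>r. \<Sum>(i, j)\<in>offdiag I. w i j * (r i * r j)) =
      (\<Sum>(i, j)\<in>offdiag I. w i j * avg (sign_vectors I) (\<lambda>r. r i * r j))"
    by (simp add: split_def avg_sum avg_mult_left)
  also have "\<dots> = 0"
    using assms by (intro sum.neutral) (auto simp: avg_sign_vectors_pair)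
  finally show ?thesis .
qed

lemma avg_sign_vectors_offdiag_form_sq:
  assumes "finite I"
  shows "avg (sign_vectors I) (\<lambda>r. (\<Sum>(i, j)\<in>offdiag I. w i j * (r i * r j))\<^sup>2) =
    (\<Sum>(i, j)\<in>offdiag I. w i j * (w i j + w j i))"
proof -
  let ?O = "offdiag I"
  have "avg (sign_vectors I) (\<lambda>r. (\<Sum>(i, j)\<in>?O. w i j * (r i * r j))\<^sup>2) =
      (\<Sum>(i, j)\<in>?O. \<Sum>(i', j')\<in>?O.
        w i j * w i' j' * avg (sign_vectors I) (\<lambda>r. r i * r j * (r i' * r j')))"
  proof -
    have "(\<Sum>(i, j)\<in>?O. w i j * (r i * r j))\<^sup>2 =
        (\<Sum>(i, j)\<in>?O. \<Sum>(i', j')\<in>?O. w i j * w i' j' * (r i * r j * (r i' * r j')))" for r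
      by (simp add: power2_eq_square sum_product split_def mult_ac)
    then show ?thesis
      by (simp add: split_def avg_sum avg_mult_left)
  qed
  also have "\<dots> = (\<Sum>(i, j)\<in>?O. w i j * (w i j + w j i))"
  proof (intro sum.cong refl, clarify)
    fix i j assume ij: "(i, j) \<in> ?O"
    have "(\<Sum>(i', j')\<in>?O. w i j * w i' j' * avg (sign_vectors I) (\<lambda>r. r i * r j * (r i' * r j'))) =
        (\<Sum>p\<in>?O. (if p = (i, j) then w i j * w i j else 0) + (if p = (j, i) then w i j * w j i else 0))"
      using assms ij by (intro sum.cong) (auto simp: avg_sign_vectors_quadruple split: if_splits)
    also have "\<dots> = w i j * (w i j + w j i)"
      using assms ij by (auto simp: sum.distrib sum.delta algebra_simps)
    finally show "(\<Sum>(i', j')\<in>?O. w i j * w i' j' * avg (sign_vectors I) (\<lambda>r. r i * r j * (r i' * r j'))) =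
        w i j * (w i j + w j i)" .
  qed
  finally show ?thesis .
qed

section \<open>Random buckets and the VW estimate\<close>

abbreviation bucket_maps :: "'a set \<Rightarrow> nat \<Rightarrow> ('a \<Rightarrow> nat) set" where
  "bucket_maps I m \<equiv> PiE I (\<lambda>_. {1..m})"

lemma finite_bucket_maps: "finite I \<Longrightarrow> finite (bucket_maps I m)"
  by (simp add: finite_PiE)

lemma bucket_maps_nonempty: "m \<ge> 1 \<Longrightarrow> bucket_maps I m \<noteq> {}"
  by (simp add: PiE_eq_empty_iff)

lemma sum_indicator_mult_indicator:
  "v \<in> A \<Longrightarrow> finite A \<Longrightarrow>
    (\<Sum>q\<in>A. (if v = q then 1 else 0) * (if v' = q then 1 else 0) :: real) = (if v = v' then 1 else 0)"
  by (simp add: if_distrib[of "\<lambda>x. x * _"] sum.delta cong: if_cong)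

lemma avg_bucket_maps_collision:
  assumes "finite I" "i \<in> I" "j \<in> I" "i \<noteq> j" "m \<ge> 1"
  shows "avg (bucket_maps I m) (\<lambda>h. if h i = h j then 1 else 0) = 1 / real m"
proof -
  have "avg (bucket_maps I m) (\<lambda>h. if h i = h j then 1 else 0) =
      avg (bucket_maps I m) (\<lambda>h. \<Sum>q\<in>{1..m}. (if h i = q then 1 else 0) * (if h j = q then 1 else 0))"
    using assms(2) by (intro avg_cong) (simp add: PiE_iff sum_indicator_mult_indicator)
  also have "\<dots> = (\<Sum>q\<in>{1..m}.
      avg {1..m} (\<lambda>v. if v = q then 1 else 0) * avg {1..m} (\<lambda>v. if v = q then 1 else 0))"
    using assms by (simp only: avg_sum) (intro sum.cong refl avg_PiE_two_coordinates; simp)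
  also have "\<dots> = (\<Sum>q\<in>{1..m}. (1 / real m)\<^sup>2)"
    by (intro sum.cong refl) (simp add: avg_def power2_eq_square)
  also have "\<dots> = 1 / real m"
    using assms(5) by (simp add: power2_eq_square)
  finally show ?thesis .
qed

definition vw_inner ::
    "'a set \<Rightarrow> nat \<Rightarrow> ('a \<Rightarrow> real) \<Rightarrow> ('a \<Rightarrow> real) \<Rightarrow> ('a \<Rightarrow> nat) \<Rightarrow> ('a \<Rightarrow> real) \<Rightarrow> real" where
  "vw_inner I m x1 x2 h r =
     (\<Sum>q\<in>{1..m}. (\<Sum>i\<in>I. x1 i * r i * (if h i = q then 1 else 0)) *
                  (\<Sum>i\<in>I. x2 i * r i * (if h i = q then 1 else 0)))"

lemma vw_inner_eq_diag_offdiag: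
  assumes "finite I" "h \<in> bucket_maps I m" "r \<in> sign_vectors I"
  shows "vw_inner I m x1 x2 h r = (\<Sum>i\<in>I. x1 i * x2 i) +
    (\<Sum>(i, j)\<in>offdiag I. (x1 i * x2 j * (if h i = h j then 1 else 0)) * (r i * r j))"
proof -
  have "vw_inner I m x1 x2 h r = (\<Sum>q\<in>{1..m}. \<Sum>i\<in>I. \<Sum>j\<in>I.
      x1 i * x2 j * (r i * r j) * ((if h i = q then 1 else 0) * (if h j = q then 1 else 0)))"
    unfolding vw_inner_def sum_product by (simp add: mult_ac)
  also have "\<dots> = (\<Sum>i\<in>I. \<Sum>j\<in>I. \<Sum>q\<in>{1..m}.
      x1 i * x2 j * (r i * r j) * ((if h i = q then 1 else 0) * (if h j = q then 1 else 0)))"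
    by (subst sum.swap) (intro sum.cong refl sum.swap)
  also have "\<dots> = (\<Sum>i\<in>I. \<Sum>j\<in>I. x1 i * x2 j * (if h i = h j then 1 else 0) * (r i * r j))"
    using assms(2) by (intro sum.cong refl)
      (simp add: PiE_iff sum_distrib_left[symmetric] sum_indicator_mult_indicator)
  also have "\<dots> = (\<Sum>i\<in>I. x1 i * x2 i) +
      (\<Sum>(i, j)\<in>offdiag I. (x1 i * x2 j * (if h i = h j then 1 else 0)) * (r i * r j))"
    using assms(1) sign_vector_square[OF assms(3)] by (simp add: sum_square_diag_offdiag)
  finally show ?thesis .
qed

lemma avg_vw_inner:
  assumes "finite I" "h \<in> bucket_maps I m"
  shows "avg (sign_vectors I) (vw_inner I m x1 x2 h) = (\<Sum>i\<in>I. x1 i * x2 i)"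
  using assms
  by (simp add: avg_cong[OF vw_inner_eq_diag_offdiag] avg_add avg_const finite_sign_vectors
      sign_vectors_nonempty avg_sign_vectors_offdiag_form)

lemma avg_vw_inner_sq:
  assumes "finite I" "h \<in> bucket_maps I m"
  shows "avg (sign_vectors I) (\<lambda>r. (vw_inner I m x1 x2 h r)\<^sup>2) = (\<Sum>i\<in>I. x1 i * x2 i)\<^sup>2 +
    (\<Sum>(i, j)\<in>offdiag I. (if h i = h j then 1 else 0) * (x1 i * x2 j * (x1 i * x2 j + x1 j * x2 i)))"
proof -
  let ?a = "\<Sum>i\<in>I. x1 i * x2 i"
  let ?w = "\<lambda>i j. x1 i * x2 j * (if h i = h j then 1 else 0)"
  let ?Q = "\<lambda>r. \<Sum>(i, j)\<in>offdiag I. ?w i j * (r i * r j)"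
  have "avg (sign_vectors I) (\<lambda>r. (vw_inner I m x1 x2 h r)\<^sup>2) =
      avg (sign_vectors I) (\<lambda>r. ?a\<^sup>2 + 2 * ?a * ?Q r + (?Q r)\<^sup>2)"
    using assms by (intro avg_cong) (simp add: vw_inner_eq_diag_offdiag power2_sum)
  also have "\<dots> = ?a\<^sup>2 + (\<Sum>(i, j)\<in>offdiag I. ?w i j * (?w i j + ?w j i))"
    using assms(1) by (simp add: avg_add avg_mult_left avg_const finite_sign_vectors sign_vectors_nonempty
        avg_sign_vectors_offdiag_form avg_sign_vectors_offdiag_form_sq)
  also have "(\<Sum>(i, j)\<in>offdiag I. ?w i j * (?w i j + ?w j i)) =
      (\<Sum>(i, j)\<in>offdiag I. (if h i = h j then 1 else 0) * (x1 i * x2 j * (x1 i * x2 j + x1 j * x2 i)))"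
    by (intro sum.cong refl) (auto simp: algebra_simps)
  finally show ?thesis .
qed

lemma avg_bucket_maps_vw_inner_sq:
  assumes "finite I" "m \<ge> 1"
  shows "avg (bucket_maps I m) (\<lambda>h. avg (sign_vectors I) (\<lambda>r. (vw_inner I m x1 x2 h r)\<^sup>2)) =
    (\<Sum>i\<in>I. x1 i * x2 i)\<^sup>2 + (\<Sum>(i, j)\<in>offdiag I. x1 i * x2 j * (x1 i * x2 j + x1 j * x2 i)) / real m"
proof -
  have "avg (bucket_maps I m) (\<lambda>h. avg (sign_vectors I) (\<lambda>r. (vw_inner I m x1 x2 h r)\<^sup>2)) =
      (\<Sum>i\<in>I. x1 i * x2 i)\<^sup>2 + (\<Sum>(i, j)\<in>offdiag I.
        avg (bucket_maps I m) (\<lambda>h. if h i = h j then 1 else 0) * (x1 i * x2 j * (x1 i * x2 j + x1 j * x2 i)))"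
    using assms avg_const[OF finite_bucket_maps bucket_maps_nonempty]
    by (simp add: avg_cong[OF avg_vw_inner_sq] avg_add split_def avg_sum avg_mult_right)
  also have "\<dots> = (\<Sum>i\<in>I. x1 i * x2 i)\<^sup>2 + (\<Sum>(i, j)\<in>offdiag I. x1 i * x2 j * (x1 i * x2 j + x1 j * x2 i)) / real m"
    unfolding sum_divide_distrib using assms
    by (intro arg_cong2[where f = "(+)"] sum.cong refl) (clarify, subst avg_bucket_maps_collision, auto)
  finally show ?thesis .
qed

lemma sum_offdiag_binary:
  fixes x1 x2 :: "'a \<Rightarrow> real"
  assumes "finite I" and binary: "\<And>i. i \<in> I \<Longrightarrow> x1 i \<in> {0, 1}" "\<And>i. i \<in> I \<Longrightarrow> x2 i \<in> {0, 1}"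
  shows "(\<Sum>(i, j)\<in>offdiag I. x1 i * x2 j * (x1 i * x2 j + x1 j * x2 i)) =
    (\<Sum>i\<in>I. x1 i) * (\<Sum>i\<in>I. x2 i) + (\<Sum>i\<in>I. x1 i * x2 i)\<^sup>2 - 2 * (\<Sum>i\<in>I. x1 i * x2 i)"
proof -
  let ?f = "\<lambda>i j. x1 i * x2 j * (x1 i * x2 j + x1 j * x2 i)"
  have f: "?f i j = x1 i * x2 j + (x1 i * x2 i) * (x1 j * x2 j)" if "i \<in> I" "j \<in> I" for i j
    using binary[OF that(1)] binary[OF that(2)] by auto
  have "(\<Sum>i\<in>I. \<Sum>j\<in>I. ?f i j) = (\<Sum>i\<in>I. \<Sum>j\<in>I. x1 i * x2 j + (x1 i * x2 i) * (x1 j * x2 j))"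
    by (intro sum.cong refl) (simp add: f)
  also have "\<dots> = (\<Sum>i\<in>I. x1 i) * (\<Sum>i\<in>I. x2 i) + (\<Sum>i\<in>I. x1 i * x2 i)\<^sup>2"
    by (simp add: sum.distrib sum_product power2_eq_square)
  finally have "(\<Sum>i\<in>I. \<Sum>j\<in>I. ?f i j) = (\<Sum>i\<in>I. x1 i) * (\<Sum>i\<in>I. x2 i) + (\<Sum>i\<in>I. x1 i * x2 i)\<^sup>2" .
  moreover have "(\<Sum>i\<in>I. \<Sum>j\<in>I. ?f i j) = (\<Sum>i\<in>I. ?f i i) + (\<Sum>(i, j)\<in>offdiag I. ?f i j)"
    using assms(1) by (rule sum_square_diag_offdiag)
  moreover have "(\<Sum>i\<in>I. ?f i i) = 2 * (\<Sum>i\<in>I. x1 i * x2 i)"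
    unfolding sum_distrib_left using binary by (intro sum.cong refl) force
  ultimately show ?thesis
    by linarith
qed

section \<open>b-bit minwise hashing\<close>

lemma finite_perm_set: "finite (perm_set D)"
  by (simp add: perm_set_def finite_permutations)

lemma perm_set_nonempty: "perm_set D \<noteq> {}"
  unfolding perm_set_def using permutes_id by blast

definition bbit_collisions :: "nat \<Rightarrow> nat \<Rightarrow> nat set \<Rightarrow> nat set \<Rightarrow> (nat \<Rightarrow> nat \<Rightarrow> nat) \<Rightarrow> real" where
  "bbit_collisions b k S1 S2 ps = (\<Sum>j<k. of_bool (bbit b S1 (ps j) = bbit b S2 (ps j)))"

lemma Pb_eq_avg: "Pb D b S1 S2 = avg (perm_set D) (\<lambda>p. of_bool (bbit b S1 p = bbit b S2 p))"
  using finite_perm_set perm_set_nonempty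
  by (simp add: Pb_def measure_pmf_of_set avg_def of_bool_def sum.If_cases Int_def)

lemma avg_bbit_collisions:
  "avg (PiE {..<k} (\<lambda>_. perm_set D)) (bbit_collisions b k S1 S2) = real k * Pb D b S1 S2"
  unfolding bbit_collisions_def Pb_eq_avg
  by (subst avg_PiE_sum_coordinates) (simp_all add: finite_perm_set perm_set_nonempty)

lemma avg_bbit_collisions_sq:
  "avg (PiE {..<k} (\<lambda>_. perm_set D)) (\<lambda>ps. (bbit_collisions b k S1 S2 ps)\<^sup>2) =
    real k * Pb D b S1 S2 + real k * (real k - 1) * (Pb D b S1 S2)\<^sup>2"
proof -
  have "(of_bool P :: real)\<^sup>2 = of_bool P" for P
    by (cases P) simp_all
  then show ?thesis
    unfolding bbit_collisions_def Pb_eq_avg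
    by (subst avg_PiE_sum_coordinates_sq) (simp_all add: finite_perm_set perm_set_nonempty)
qed

lemma sum_lessThan_blocks:
  fixes f :: "nat \<Rightarrow> 'a::comm_monoid_add"
  shows "(\<Sum>i<N * k. f i) = (\<Sum>j<k. \<Sum>t<N. f (j * N + t))"
proof -
  have "(\<Sum>i<N * k. f i) = (\<Sum>j<k. \<Sum>i\<in>{0 + j * N..<N + j * N}. f i)"
    using sum.nat_group[of f N k] by (simp add: mult.commute add.commute)
  also have "\<dots> = (\<Sum>j<k. \<Sum>t<N. f (j * N + t))"
    by (simp only: sum.atLeastLessThan_shift_bounds) (simp add: lessThan_atLeast0 comp_def add.commute)
  finally show ?thesis .
qed

lemma xvec_block: "t < 2 ^ b \<Longrightarrow> xvec b S ps (j * 2 ^ b + t) = of_bool (bbit b S (ps j) = t)"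
  by (simp add: xvec_def)

lemma xvec_binary: "xvec b S ps i \<in> {0, 1}"
  by (simp add: xvec_def)

lemma bbit_less: "bbit b S p < 2 ^ b"
  by (simp add: bbit_def)

lemma sum_xvec: "(\<Sum>i<2 ^ b * k. xvec b S ps i) = real k"
proof -
  have "(\<Sum>i<2 ^ b * k. xvec b S ps i) = (\<Sum>j<k. \<Sum>t<2 ^ b. of_bool (bbit b S (ps j) = t))"
    by (simp add: sum_lessThan_blocks xvec_block)
  also have "\<dots> = (\<Sum>j<k. 1)"
    using bbit_less by (intro sum.cong refl) (simp add: of_bool_def sum.delta)
  finally show ?thesis
    by simp
qed

lemma sum_xvec_mult:
  "(\<Sum>i<2 ^ b * k. xvec b S1 ps i * xvec b S2 ps i) = bbit_collisions b k S1 S2 ps"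
proof -
  have "(\<Sum>i<2 ^ b * k. xvec b S1 ps i * xvec b S2 ps i) =
      (\<Sum>j<k. \<Sum>t<2 ^ b. if t = bbit b S1 (ps j) then of_bool (bbit b S1 (ps j) = bbit b S2 (ps j)) else 0)"
    by (simp add: sum_lessThan_blocks xvec_block) (intro sum.cong refl, auto)
  also have "\<dots> = bbit_collisions b k S1 S2 ps"
    using bbit_less by (simp add: bbit_collisions_def)
  finally show ?thesis .
qed

lemma That_vw_eq_vw_inner:
  "That_vw b k m S1 S2 (ps, h, r) = vw_inner {..<2 ^ b * k} m (xvec b S1 ps) (xvec b S2 ps) h r"
  by (simp add: That_vw_def gvw_def vw_inner_def)

lemma avg_That_vw_given_perms:
  assumes "m \<ge> 1"
  shows "avg (bucket_maps {..<2 ^ b * k} m)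
      (\<lambda>h. avg (sign_vectors {..<2 ^ b * k}) (\<lambda>r. That_vw b k m S1 S2 (ps, h, r))) =
    bbit_collisions b k S1 S2 ps"
proof -
  have "avg (bucket_maps {..<2 ^ b * k} m)
      (\<lambda>h. avg (sign_vectors {..<2 ^ b * k}) (\<lambda>r. That_vw b k m S1 S2 (ps, h, r))) =
    avg (bucket_maps {..<2 ^ b * k} m) (\<lambda>_. bbit_collisions b k S1 S2 ps)"
    by (intro avg_cong) (simp add: That_vw_eq_vw_inner avg_vw_inner sum_xvec_mult)
  also have "\<dots> = bbit_collisions b k S1 S2 ps"
    using assms by (intro avg_const finite_bucket_maps bucket_maps_nonempty) simp_all
  finally show ?thesis .
qed

lemma avg_That_vw_sq_given_perms:
  assumes "m \<ge> 1"
  shows "avg (bucket_maps {..<2 ^ b * k} m)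
      (\<lambda>h. avg (sign_vectors {..<2 ^ b * k}) (\<lambda>r. (That_vw b k m S1 S2 (ps, h, r))\<^sup>2)) =
    (bbit_collisions b k S1 S2 ps)\<^sup>2 +
    (real k * real k + (bbit_collisions b k S1 S2 ps)\<^sup>2 - 2 * bbit_collisions b k S1 S2 ps) / real m"
  unfolding That_vw_eq_vw_inner avg_bucket_maps_vw_inner_sq[OF finite_lessThan assms]
  by (simp add: sum_offdiag_binary[OF finite_lessThan xvec_binary xvec_binary] sum_xvec sum_xvec_mult)

lemma avg_sample_space:
  "avg (sample_space D b k m) f = avg (PiE {..<k} (\<lambda>_. perm_set D))
    (\<lambda>ps. avg (bucket_maps {..<2 ^ b * k} m) (\<lambda>h. avg (sign_vectors {..<2 ^ b * k}) (\<lambda>r. f (ps, h, r))))"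
  by (simp add: sample_space_def avg_Times finite_PiE finite_perm_set)

lemma avg_That_vw:
  assumes "m \<ge> 1"
  shows "avg (sample_space D b k m) (That_vw b k m S1 S2) = real k * Pb D b S1 S2"
  unfolding avg_sample_space avg_That_vw_given_perms[OF assms] by (rule avg_bbit_collisions)

lemma avg_That_vw_sq:
  assumes "m \<ge> 1"
  shows "avg (sample_space D b k m) (\<lambda>\<omega>. (That_vw b k m S1 S2 \<omega>)\<^sup>2) =
    (1 + 1 / real m) * (real k * Pb D b S1 S2 + real k * (real k - 1) * (Pb D b S1 S2)\<^sup>2) +
    (real k * real k - 2 * (real k * Pb D b S1 S2)) / real m"
proof -
  have const: "avg (PiE {..<k} (\<lambda>_. perm_set D)) (\<lambda>_. c) = c" for c
    by (intro avg_const) (simp_all add: finite_PiE finite_perm_set PiE_eq_empty_iff perm_set_nonempty)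
  show ?thesis
    unfolding avg_sample_space avg_That_vw_sq_given_perms[OF assms]
    by (simp add: avg_add avg_diff avg_divide avg_mult_left const avg_bbit_collisions avg_bbit_collisions_sq
        add_divide_distrib diff_divide_distrib algebra_simps)
qed

lemma finite_sample_space: "finite (sample_space D b k m)"
  by (simp add: sample_space_def finite_PiE finite_perm_set)

lemma sample_space_nonempty: "m \<ge> 1 \<Longrightarrow> sample_space D b k m \<noteq> {}"
  by (simp add: sample_space_def PiE_eq_empty_iff perm_set_nonempty)

theorem lemma2:
  fixes D b k m :: nat and S1 S2 :: "nat set"
  assumes "S1 \<subseteq> {..<D}" and "S2 \<subseteq> {..<D}" and "S1 \<noteq> {}" and "S2 \<noteq> {}"
    and "b \<ge> 1" and "k \<ge> 1" and "m \<ge> 1"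
    and "Pb D b S1 S2 = C1b D b S1 S2 + (1 - C2b D b S1 S2) * resemblance S1 S2"
    and "C2b D b S1 S2 \<noteq> 1"
  shows "measure_pmf.expectation (pmf_of_set (sample_space D b k m)) (Rhat_bvw D b k m S1 S2)
           = resemblance S1 S2
       \<and> measure_pmf.variance (pmf_of_set (sample_space D b k m)) (Rhat_bvw D b k m S1 S2)
           = 1 / real k * (Pb D b S1 S2 * (1 - Pb D b S1 S2)) / (1 - C2b D b S1 S2) ^ 2
             + 1 / real m * (1 / (1 - C2b D b S1 S2) ^ 2)
               * (1 + Pb D b S1 S2 ^ 2 - Pb D b S1 S2 * (1 + Pb D b S1 S2) / real k)"
proof -
  let ?\<Omega> = "sample_space D b k m" and ?T = "That_vw b k m S1 S2" and ?R = "Rhat_bvw D b k m S1 S2"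
  define p c R where "p = Pb D b S1 S2" and "c = 1 - C2b D b S1 S2" and "R = resemblance S1 S2"
  define d where "d = real k * c"
  have "c \<noteq> 0" "d \<noteq> 0"
    using assms(6,9) by (simp_all add: d_def c_def)
  have Rhat: "?R = (\<lambda>\<omega>. R + (?T \<omega> - real k * p) / d)"
    using assms(6,8) \<open>d \<noteq> 0\<close>
    by (simp add: fun_eq_iff Rhat_bvw_def p_def c_def R_def d_def field_simps)
      (simp add: distrib_left[symmetric])
  have mean: "avg ?\<Omega> ?R = R"
    using assms(7) by (simp add: Rhat avg_add avg_divide avg_diff avg_That_vw finite_sample_space
        sample_space_nonempty avg_const p_def)
  have "avg ?\<Omega> (\<lambda>\<omega>. (?R \<omega> - R)\<^sup>2) =
      avg ?\<Omega> (\<lambda>\<omega>. ((?T \<omega>)\<^sup>2 + (real k * p)\<^sup>2 - 2 * ?T \<omega> * (real k * p)) / d\<^sup>2)"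
    by (simp add: Rhat power_divide power2_diff)
  also have "\<dots> = (avg ?\<Omega> (\<lambda>\<omega>. (?T \<omega>)\<^sup>2) - (real k * p)\<^sup>2) / d\<^sup>2"
    using assms(7)
    by (simp add: avg_add avg_divide avg_diff avg_mult_left avg_mult_right avg_That_vw
        finite_sample_space sample_space_nonempty avg_const p_def power2_eq_square)
  finally have var:
    "avg ?\<Omega> (\<lambda>\<omega>. (?R \<omega> - R)\<^sup>2) = (avg ?\<Omega> (\<lambda>\<omega>. (?T \<omega>)\<^sup>2) - (real k * p)\<^sup>2) / d\<^sup>2" .
  show ?thesis
    using assms(6,7) \<open>c \<noteq> 0\<close>
    unfolding expectation_pmf_of_set_eq_avg[OF finite_sample_space sample_space_nonempty[OF assms(7)]]
    unfolding mean var avg_That_vw_sq[OF assms(7)] p_def[symmetric] c_def[symmetric] R_def[symmetric]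
    by (simp add: d_def field_simps power2_eq_square)
qed

end
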